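(* Let $L\in\mathcal{N}$ and assume that $L$ is isomorphic to a sublattice of a free lattice. Assume that $K$ is a sublattice of $L$ and $a\in L$ is an element such that $a\parallel b$ for all $b\in K$. Then $$\mathrm{Dec}(K)\le \bigl|\{a\vee b: b\in K\}\times\{a\wedge b: b\in K\}\bigr|.$$
   Context: $\mathcal{N}$ denotes the variety of lattices generated by the pentagon $N_5$. For elements $x,y$, $x\parallel y$ means neither $x\le y$ nor $y\le x$. A subset $S$ of a lattice $K$ is convex if $x,z\in S$, $y\in K$, $x\le y\le z$ imply $y\in S$; a convex distributive sublattice of $K$ is a sublattice of $K$ that is convex and is a distributive lattice. A set partition $\mathcal{F}$ of the set of elements of $K$ is called distributive if every $F\in\mathcal{F}$ is a convex distributive sublattice of $K$, and for all distinct $F_1,F_2\in\mathcal{F}$, either $F_1\cup F_2$ is not a sublattice of $K$, or $F_1\cup F_2$ is not a convex subset of $K$, or $F_1\cup F_2$ is a convex distributive sublattice of $K$. $\mathrm{Dec}(K)$ is the minimum cardinality of a distributive partition of $K$. *)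

theory Defs
  imports Main
begin

datatype 'v lterm = Var 'v | Join "'v lterm" "'v lterm" | Meet "'v lterm" "'v lterm"

fun eval_with :: "('b \<Rightarrow> 'b \<Rightarrow> 'b) \<Rightarrow> ('b \<Rightarrow> 'b \<Rightarrow> 'b) \<Rightarrow> ('v \<Rightarrow> 'b) \<Rightarrow> 'v lterm \<Rightarrow> 'b" where
  "eval_with j m \<rho> (Var v) = \<rho> v"
| "eval_with j m \<rho> (Join s t) = j (eval_with j m \<rho> s) (eval_with j m \<rho> t)"
| "eval_with j m \<rho> (Meet s t) = m (eval_with j m \<rho> s) (eval_with j m \<rho> t)"

datatype n5 = N0 | Na | Nb | Nc | N1

fun n5_le :: "n5 \<Rightarrow> n5 \<Rightarrow> bool" where
  "n5_le N0 _ = True"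
| "n5_le _ N1 = True"
| "n5_le Na Na = True"
| "n5_le Na Nc = True"
| "n5_le Nb Nb = True"
| "n5_le Nc Nc = True"
| "n5_le _ _ = False"

definition n5_join :: "n5 \<Rightarrow> n5 \<Rightarrow> n5" where
  "n5_join x y = (if n5_le x y then y else if n5_le y x then x else N1)"

definition n5_meet :: "n5 \<Rightarrow> n5 \<Rightarrow> n5" where
  "n5_meet x y = (if n5_le x y then x else if n5_le y x then y else N0)"

text \<open>The variety \<open>\<N>\<close> generated by N5 = the class of lattices satisfying every
  lattice identity that holds in N5 (Birkhoff's HSP theorem).\<close>

definition in_var_N5 :: "'a::lattice itself \<Rightarrow> bool" where
  "in_var_N5 _ \<longleftrightarrow>
     (\<forall>s t :: nat lterm.
        (\<forall>\<rho> :: nat \<Rightarrow> n5. eval_with n5_join n5_meet \<rho> s = eval_with n5_join n5_meet \<rho> t)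
        \<longrightarrow> (\<forall>\<rho> :: nat \<Rightarrow> 'a. eval_with sup inf \<rho> s = eval_with sup inf \<rho> t))"

inductive lat_eq :: "'x lterm \<Rightarrow> 'x lterm \<Rightarrow> bool" where
  refl: "lat_eq s s"
| sym: "lat_eq s t \<Longrightarrow> lat_eq t s"
| trans: "lat_eq s t \<Longrightarrow> lat_eq t u \<Longrightarrow> lat_eq s u"
| cong_join: "lat_eq s s' \<Longrightarrow> lat_eq t t' \<Longrightarrow> lat_eq (Join s t) (Join s' t')"
| cong_meet: "lat_eq s s' \<Longrightarrow> lat_eq t t' \<Longrightarrow> lat_eq (Meet s t) (Meet s' t')"
| join_idem: "lat_eq (Join s s) s"
| meet_idem: "lat_eq (Meet s s) s"
| join_comm: "lat_eq (Join s t) (Join t s)"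
| meet_comm: "lat_eq (Meet s t) (Meet t s)"
| join_assoc: "lat_eq (Join (Join s t) u) (Join s (Join t u))"
| meet_assoc: "lat_eq (Meet (Meet s t) u) (Meet s (Meet t u))"
| absorb1: "lat_eq (Join s (Meet s t)) s"
| absorb2: "lat_eq (Meet s (Join s t)) s"

text \<open>The free lattice FL(X) on the generator set X = UNIV :: 'x set is the quotient
  of \<open>'x lterm\<close> by \<open>lat_eq\<close>. A lattice embedding of 'a into FL('x) is given via
  representatives: injective modulo \<open>lat_eq\<close> and preserving joins and meets.\<close>

definition embeds_in_free_lattice :: "('a::lattice \<Rightarrow> 'x lterm) \<Rightarrow> bool" where
  "embeds_in_free_lattice h \<longleftrightarrow>
     (\<forall>x y. lat_eq (h x) (h y) \<longrightarrow> x = y) \<and>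
     (\<forall>x y. lat_eq (h (sup x y)) (Join (h x) (h y))) \<and>
     (\<forall>x y. lat_eq (h (inf x y)) (Meet (h x) (h y)))"

definition sublattice_of :: "'a::lattice set \<Rightarrow> 'a set \<Rightarrow> bool" where
  "sublattice_of S K \<longleftrightarrow> S \<subseteq> K \<and> (\<forall>x\<in>S. \<forall>y\<in>S. sup x y \<in> S \<and> inf x y \<in> S)"

definition convex_in :: "'a::lattice set \<Rightarrow> 'a set \<Rightarrow> bool" where
  "convex_in S K \<longleftrightarrow> S \<subseteq> K \<and> (\<forall>x\<in>S. \<forall>z\<in>S. \<forall>y\<in>K. x \<le> y \<and> y \<le> z \<longrightarrow> y \<in> S)"

definition distrib_set :: "'a::lattice set \<Rightarrow> bool" where
  "distrib_set S \<longleftrightarrow> (\<forall>x\<in>S. \<forall>y\<in>S. \<forall>z\<in>S. inf x (sup y z) = sup (inf x y) (inf x z))"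

definition convex_distrib_sublattice :: "'a::lattice set \<Rightarrow> 'a set \<Rightarrow> bool" where
  "convex_distrib_sublattice S K \<longleftrightarrow> sublattice_of S K \<and> convex_in S K \<and> distrib_set S"

definition is_partition :: "'a set set \<Rightarrow> 'a set \<Rightarrow> bool" where
  "is_partition \<F> K \<longleftrightarrow> \<Union>\<F> = K \<and> {} \<notin> \<F> \<and>
     (\<forall>F1\<in>\<F>. \<forall>F2\<in>\<F>. F1 \<noteq> F2 \<longrightarrow> F1 \<inter> F2 = {})"

definition distributive_partition :: "'a::lattice set set \<Rightarrow> 'a set \<Rightarrow> bool" where
  "distributive_partition \<F> K \<longleftrightarrow> is_partition \<F> K \<and>
     (\<forall>F\<in>\<F>. convex_distrib_sublattice F K) \<and>
     (\<forall>F1\<in>\<F>. \<forall>F2\<in>\<F>. F1 \<noteq> F2 \<longrightarrow>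
        \<not> sublattice_of (F1 \<union> F2) K \<or> \<not> convex_in (F1 \<union> F2) K \<or>
        convex_distrib_sublattice (F1 \<union> F2) K)"

text \<open>\<open>Dec(K) \<le> |S|\<close>: since Dec(K) is the least cardinality of a distributive
  partition, this means some distributive partition of K injects into S.\<close>

definition Dec_le :: "'a::lattice set \<Rightarrow> 'b set \<Rightarrow> bool" where
  "Dec_le K S \<longleftrightarrow> (\<exists>\<F>. distributive_partition \<F> K \<and> (\<exists>f. inj_on f \<F> \<and> f ` \<F> \<subseteq> S))"

definition incomparable :: "'a::order \<Rightarrow> 'a \<Rightarrow> bool" where
  "incomparable x y \<longleftrightarrow> \<not> x \<le> y \<and> \<not> y \<le> x"

end

theory Submission
  imports Defs
begin

text \<open>Map each element \<open>c\<close> to the pair \<open>(a \<squnion> c, a \<sqinter> c)\<close> and partition \<open>K\<close> into the fibres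
  of this map; the partition is then indexed by a subset of the product in the statement.
  Every lattice in \<open>\<N>\<close> is meet- and join-semidistributive, which makes each fibre a
  sublattice; fibres are convex because the map is monotone. Moreover \<open>N\<^sub>5\<close> satisfies an
  identity saying that three elements whose images form a chain generate a distributive
  sublattice. This gives distributivity of the fibres, and of the union of two fibres whenever
  that union is a sublattice: the join of representatives then lies in one of the two fibres,
  which forces their images to be comparable.\<close>

lemma in_var_N5_eval_eq:
  assumes "in_var_N5 TYPE('a::lattice)"
    and "\<forall>\<rho>::nat \<Rightarrow> n5. eval_with n5_join n5_meet \<rho> s = eval_with n5_join n5_meet \<rho> t"
  shows "eval_with sup inf (\<rho>::nat \<Rightarrow> 'a) s = eval_with sup inf \<rho> t"
  using assms unfolding in_var_N5_def by blast

lemma n5_meet_semidistrib_identity: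
  "n5_meet x (n5_join y z) = n5_meet x (n5_join y (n5_meet x (n5_join z (n5_meet x y))))"
  by (cases x; cases y; cases z) (simp_all add: n5_join_def n5_meet_def)

lemma n5_join_semidistrib_identity:
  "n5_join x (n5_meet y z) = n5_join x (n5_meet y (n5_join x (n5_meet z (n5_join x y))))"
  by (cases x; cases y; cases z) (simp_all add: n5_join_def n5_meet_def)

text \<open>The terms \<open>y\<^sub>1 = y \<squnion> (a \<sqinter> x)\<close>, \<open>z\<^sub>1 = z \<squnion> (a \<sqinter> y\<^sub>1)\<close>,
  \<open>y\<^sub>2 = y\<^sub>1 \<sqinter> (a \<squnion> z\<^sub>1)\<close>, \<open>x\<^sub>2 = x \<sqinter> (a \<squnion> y\<^sub>2)\<close> turn any \<open>x, y, z\<close> into a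
  triple satisfying the hypotheses of \<open>chain_distrib\<close> below, and leave such a triple
  unchanged; so this identity expresses distributivity of those triples.\<close>

lemma n5_chain_distrib_identity:
  fixes a x y z :: n5
  defines "y1 \<equiv> n5_join y (n5_meet a x)"
  defines "z1 \<equiv> n5_join z (n5_meet a y1)"
  defines "y2 \<equiv> n5_meet y1 (n5_join a z1)"
  defines "x2 \<equiv> n5_meet x (n5_join a y2)"
  shows "n5_meet x2 (n5_join y2 z1) = n5_join (n5_meet x2 y2) (n5_meet x2 z1)"
    and "n5_meet y2 (n5_join x2 z1) = n5_join (n5_meet y2 x2) (n5_meet y2 z1)"
    and "n5_meet z1 (n5_join x2 y2) = n5_join (n5_meet z1 x2) (n5_meet z1 y2)"
  unfolding assms
  by (cases a; cases x; cases y; cases z; simp add: n5_join_def n5_meet_def)+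

lemma meet_semidistrib:
  assumes "in_var_N5 TYPE('a::lattice)" and "inf a d = inf a (e::'a)"
  shows "inf a (sup d e) = inf a d"
proof -
  let ?s = "Meet (Var 0) (Join (Var 1) (Var (2::nat)))"
  let ?t = "Meet (Var 0) (Join (Var 1) (Meet (Var 0) (Join (Var 2) (Meet (Var 0) (Var (1::nat))))))"
  have "\<forall>\<rho>::nat \<Rightarrow> n5. eval_with n5_join n5_meet \<rho> ?s = eval_with n5_join n5_meet \<rho> ?t"
    using n5_meet_semidistrib_identity by simp
  from in_var_N5_eval_eq[OF assms(1) this, of "\<lambda>i. if i = 0 then a else if i = 1 then d else e"]
  have "inf a (sup d e) = inf a (sup d (inf a (sup e (inf a d))))" by simp
  also have "\<dots> = inf a d"
    using assms(2) by (metis inf_le2 sup.absorb1)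
  finally show ?thesis .
qed

lemma join_semidistrib:
  assumes "in_var_N5 TYPE('a::lattice)" and "sup a d = sup a (e::'a)"
  shows "sup a (inf d e) = sup a d"
proof -
  let ?s = "Join (Var 0) (Meet (Var 1) (Var (2::nat)))"
  let ?t = "Join (Var 0) (Meet (Var 1) (Join (Var 0) (Meet (Var 2) (Join (Var 0) (Var (1::nat))))))"
  have "\<forall>\<rho>::nat \<Rightarrow> n5. eval_with n5_join n5_meet \<rho> ?s = eval_with n5_join n5_meet \<rho> ?t"
    using n5_join_semidistrib_identity by simp
  from in_var_N5_eval_eq[OF assms(1) this, of "\<lambda>i. if i = 0 then a else if i = 1 then d else e"]
  have "sup a (inf d e) = sup a (inf d (sup a (inf e (sup a d))))" by simp
  also have "\<dots> = sup a d"
    using assms(2) by (metis sup_ge2 inf.absorb1)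
  finally show ?thesis .
qed

definition sup_inf_with :: "'a::lattice \<Rightarrow> 'a \<Rightarrow> 'a \<times> 'a" where
  "sup_inf_with a c = (sup a c, inf a c)"

definition sup_inf_le :: "'a::lattice \<Rightarrow> 'a \<Rightarrow> 'a \<Rightarrow> bool" where
  "sup_inf_le a p q \<longleftrightarrow> sup a p \<le> sup a q \<and> inf a p \<le> inf a q"

lemma sup_inf_le_if_le: "p \<le> q \<Longrightarrow> sup_inf_le a p q"
  by (simp add: sup_inf_le_def sup.coboundedI2 inf.coboundedI2)

lemma sup_inf_le_if_eq: "sup_inf_with a p = sup_inf_with a q \<Longrightarrow> sup_inf_le a p q"
  by (simp add: sup_inf_le_def sup_inf_with_def)

lemma sup_inf_le_cong:
  "sup_inf_with a p = sup_inf_with a p' \<Longrightarrow> sup_inf_with a q = sup_inf_with a q' \<Longrightarrow>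
   sup_inf_le a p q \<longleftrightarrow> sup_inf_le a p' q'"
  by (simp add: sup_inf_le_def sup_inf_with_def)

lemma sup_inf_with_eq_if_between:
  assumes "x \<le> y" "y \<le> z" "sup_inf_with a x = sup_inf_with a z"
  shows "sup_inf_with a y = sup_inf_with a x"
proof -
  have "sup a x \<le> sup a y" "sup a y \<le> sup a z" "inf a x \<le> inf a y" "inf a y \<le> inf a z"
    using assms(1,2) by (simp_all add: le_supI2 le_infI2 sup.coboundedI2 inf.coboundedI2)
  with assms(3) show ?thesis
    unfolding sup_inf_with_def by (metis antisym prod.inject)
qed

lemma chain_distrib:
  assumes N: "in_var_N5 TYPE('a::lattice)"
    and xy: "sup_inf_le a x y" and yz: "sup_inf_le a y (z::'a)"
  shows "distrib_set {x, y, z}"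
proof -
  let ?Y1 = "Join (Var 2) (Meet (Var 0) (Var (1::nat)))"
  let ?Z1 = "Join (Var 3) (Meet (Var 0) ?Y1)"
  let ?Y2 = "Meet ?Y1 (Join (Var 0) ?Z1)"
  let ?X2 = "Meet (Var 1) (Join (Var 0) ?Y2)"
  let ?\<rho> = "\<lambda>i::nat. if i = 0 then a else if i = 1 then x else if i = 2 then y else z"
  note le = xy[unfolded sup_inf_le_def] yz[unfolded sup_inf_le_def]
  have "sup y (inf a x) = y" "sup z (inf a y) = z" "inf y (sup a z) = y" "inf x (sup a y) = x"
    using le by (meson inf_le2 sup_ge2 order_trans sup.absorb1 inf.absorb1)+
  moreover
  have "eval_with sup inf ?\<rho> (Meet ?X2 (Join ?Y2 ?Z1)) = eval_with sup inf ?\<rho> (Join (Meet ?X2 ?Y2) (Meet ?X2 ?Z1))"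
    and "eval_with sup inf ?\<rho> (Meet ?Y2 (Join ?X2 ?Z1)) = eval_with sup inf ?\<rho> (Join (Meet ?Y2 ?X2) (Meet ?Y2 ?Z1))"
    and "eval_with sup inf ?\<rho> (Meet ?Z1 (Join ?X2 ?Y2)) = eval_with sup inf ?\<rho> (Join (Meet ?Z1 ?X2) (Meet ?Z1 ?Y2))"
    by (rule in_var_N5_eval_eq[OF N]; simp add: n5_chain_distrib_identity)+
  ultimately have "inf x (sup y z) = sup (inf x y) (inf x z)"
    and "inf y (sup x z) = sup (inf y x) (inf y z)"
    and "inf z (sup x y) = sup (inf z x) (inf z y)"
    by simp_all
  then show ?thesis
    unfolding distrib_set_def
    by (auto simp: sup_commute inf_commute inf.absorb1 inf.absorb2 sup.absorb1 sup.absorb2)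
qed

lemma distrib_set_if_sup_inf_le_total:
  assumes N: "in_var_N5 TYPE('a::lattice)"
    and total: "\<forall>p\<in>S. \<forall>q\<in>S. sup_inf_le a p q \<or> sup_inf_le a q p"
  shows "distrib_set (S::'a set)"
  unfolding distrib_set_def
proof (intro ballI)
  fix x y z assume "x \<in> S" "y \<in> S" "z \<in> S"
  then have "sup_inf_le a x y \<or> sup_inf_le a y x" "sup_inf_le a y z \<or> sup_inf_le a z y"
    "sup_inf_le a x z \<or> sup_inf_le a z x"
    using total by blast+
  then obtain p q r where "{p, q, r} = {x, y, z}" "sup_inf_le a p q" "sup_inf_le a q r"
    by (metis insert_commute)
  with chain_distrib[OF N] have "distrib_set {x, y, z}"
    by metis
  then show "inf x (sup y z) = sup (inf x y) (inf x z)"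
    unfolding distrib_set_def by blast
qed

definition fibres :: "'a set \<Rightarrow> ('a \<Rightarrow> 'b) \<Rightarrow> 'a set set" where
  "fibres K \<phi> = (\<lambda>v. {c \<in> K. \<phi> c = v}) ` \<phi> ` K"

lemma is_partition_fibres: "is_partition (fibres K \<phi>) K"
  unfolding is_partition_def fibres_def by auto

lemma Dec_le_if_fibres:
  assumes "distributive_partition (fibres K \<phi>) K" and "\<phi> ` K \<subseteq> S"
  shows "Dec_le K S"
proof -
  let ?fibre = "\<lambda>v. {c \<in> K. \<phi> c = v}"
  have "inj_on (inv_into (\<phi> ` K) ?fibre) (fibres K \<phi>)"
    unfolding fibres_def by (rule inj_on_inv_into) simp
  moreover have "inv_into (\<phi> ` K) ?fibre ` fibres K \<phi> \<subseteq> \<phi> ` K"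
    unfolding fibres_def by (rule image_subsetI) (rule inv_into_into)
  ultimately show ?thesis
    unfolding Dec_le_def using assms by blast
qed

lemma convex_distrib_sublattice_fibre:
  assumes N: "in_var_N5 TYPE('a::lattice)" and K: "sublattice_of K UNIV"
  shows "convex_distrib_sublattice {c \<in> K. sup_inf_with a c = v} (K::'a set)"
    (is "convex_distrib_sublattice ?F K")
  unfolding convex_distrib_sublattice_def
proof (intro conjI)
  show "sublattice_of ?F K"
    unfolding sublattice_of_def
  proof (intro conjI ballI)
    fix x y assume x: "x \<in> ?F" and y: "y \<in> ?F"
    then have j: "sup a x = sup a y" and m: "inf a x = inf a y"
      by (auto simp: sup_inf_with_def)
    have "sup a (sup x y) = sup (sup a x) (sup a y)" "inf a (inf x y) = inf (inf a x) (inf a y)"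
      by (simp_all add: sup_aci inf_aci)
    then have "sup a (sup x y) = sup a x" "inf a (inf x y) = inf a x"
      using j m by simp_all
    moreover have "inf a (sup x y) = inf a x" "sup a (inf x y) = sup a x"
      using meet_semidistrib[OF N m] join_semidistrib[OF N j] .
    ultimately show "sup x y \<in> ?F" "inf x y \<in> ?F"
      using x y K by (auto simp: sublattice_of_def sup_inf_with_def)
  qed auto
  show "convex_in ?F K"
    unfolding convex_in_def
  proof (intro conjI ballI impI)
    fix x z y assume "x \<in> ?F" "z \<in> ?F" "y \<in> K" "x \<le> y \<and> y \<le> z"
    then show "y \<in> ?F"
      using sup_inf_with_eq_if_between[of x y z a] by simp
  qed auto
  show "distrib_set ?F"
    by (rule distrib_set_if_sup_inf_le_total[OF N, of _ a]) (simp add: sup_inf_le_if_eq)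
qed

lemma distrib_set_union_fibres:
  assumes N: "in_var_N5 TYPE('a::lattice)"
    and b1: "b1 \<in> K" and b2: "b2 \<in> K"
    and sub: "sublattice_of ({c \<in> K. sup_inf_with a c = sup_inf_with a b1} \<union>
                             {c \<in> K. sup_inf_with a c = sup_inf_with a b2}) (K::'a set)"
  shows "distrib_set ({c \<in> K. sup_inf_with a c = sup_inf_with a b1} \<union>
                      {c \<in> K. sup_inf_with a c = sup_inf_with a b2})"
    (is "distrib_set ?U")
proof (rule distrib_set_if_sup_inf_le_total[OF N, of _ a], intro ballI)
  have "sup_inf_le a b1 (sup b1 b2)" "sup_inf_le a b2 (sup b1 b2)"
    by (simp_all add: sup_inf_le_if_le)
  moreover have "sup_inf_with a (sup b1 b2) = sup_inf_with a b1 \<or>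
      sup_inf_with a (sup b1 b2) = sup_inf_with a b2"
    using sub b1 b2 unfolding sublattice_of_def by blast
  ultimately have cmp: "sup_inf_le a b2 b1 \<or> sup_inf_le a b1 b2"
    using sup_inf_le_cong[OF HOL.refl, of a _ b2 b1] sup_inf_le_cong[OF HOL.refl, of a _ b1 b2] by blast
  fix p q assume "p \<in> ?U" "q \<in> ?U"
  then obtain p' q' where "p' \<in> {b1, b2}" "q' \<in> {b1, b2}"
    and eq: "sup_inf_with a p = sup_inf_with a p'" "sup_inf_with a q = sup_inf_with a q'"
    by blast
  with cmp have "sup_inf_le a p' q' \<or> sup_inf_le a q' p'"
    by (auto simp: sup_inf_le_if_eq)
  then show "sup_inf_le a p q \<or> sup_inf_le a q p"
    using sup_inf_le_cong[OF eq] sup_inf_le_cong[OF eq(2,1)] by blast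
qed

lemma distributive_partition_fibres:
  assumes N: "in_var_N5 TYPE('a::lattice)" and K: "sublattice_of K UNIV"
  shows "distributive_partition (fibres K (sup_inf_with a)) (K::'a set)"
  unfolding distributive_partition_def
proof (intro conjI ballI impI)
  show "is_partition (fibres K (sup_inf_with a)) K"
    by (rule is_partition_fibres)
  show "convex_distrib_sublattice F K" if "F \<in> fibres K (sup_inf_with a)" for F
    using that convex_distrib_sublattice_fibre[OF N K] by (auto simp: fibres_def)
  fix F1 F2 assume "F1 \<in> fibres K (sup_inf_with a)" "F2 \<in> fibres K (sup_inf_with a)"
  then obtain b1 b2 where "b1 \<in> K" "b2 \<in> K"
    "F1 = {c \<in> K. sup_inf_with a c = sup_inf_with a b1}"
      "F2 = {c \<in> K. sup_inf_with a c = sup_inf_with a b2}"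
    by (auto simp: fibres_def)
  then show "\<not> sublattice_of (F1 \<union> F2) K \<or> \<not> convex_in (F1 \<union> F2) K \<or>
      convex_distrib_sublattice (F1 \<union> F2) K"
    using distrib_set_union_fibres[OF N] by (auto simp: convex_distrib_sublattice_def)
qed

theorem theorem5p2:
  fixes a :: "'a::lattice" and K :: "'a set"
  assumes "in_var_N5 TYPE('a)"
    and "\<exists>h :: 'a \<Rightarrow> 'x lterm. embeds_in_free_lattice h"
    and "sublattice_of K UNIV"
    and "\<forall>b\<in>K. incomparable a b"
  shows "Dec_le K ({sup a b | b. b \<in> K} \<times> {inf a b | b. b \<in> K})"
proof (rule Dec_le_if_fibres)
  show "distributive_partition (fibres K (sup_inf_with a)) K"
    using assms(1,3) by (rule distributive_partition_fibres)
  show "sup_inf_with a ` K \<subseteq> {sup a b | b. b \<in> K} \<times> {inf a b | b. b \<in> K}"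
    by (auto simp: sup_inf_with_def)
qed

end
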